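(* Let $X$ be a real Banach space. Consider: (1) $X$ is UR. (2) $d(Q_{S_X}(x,\frac1n),Q_{S_X}(x',\frac1n))\to\|x-x'\|$ uniformly on $(x,x')\in S_X\times S_X$. (3) $d(Q_{S_X}(x,\frac1n),Q_{S_X}(-x,\frac1n))\to2$ uniformly on $x\in S_X$. Then $(1)\Rightarrow(2)\Rightarrow(3)$.
   Context: $B_X,S_X$ are the closed unit ball and unit sphere of $X$. For non-empty bounded $F$, $x\in X$, $\delta\ge0$: $r(F,x)=\sup_{y\in F}\|x-y\|$, $Q_F(x,\delta)=\{y\in F:\|x-y\|\ge r(F,x)-\delta\}$. For non-empty sets $A,B$, $d(A,B)=\inf\{\|a-b\|:a\in A,b\in B\}$. $X$ is UR if $\|x_n-y_n\|\to0$ whenever $(x_n),(y_n)\subseteq S_X$ with $\|\frac{x_n+y_n}{2}\|\to1$. *)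

theory Defs
  imports "HOL-Analysis.Analysis"
begin

definition rad :: "'a::real_normed_vector set \<Rightarrow> 'a \<Rightarrow> real" where
  "rad F x = (SUP y\<in>F. norm (x - y))"

definition Qfar :: "'a::real_normed_vector set \<Rightarrow> 'a \<Rightarrow> real \<Rightarrow> 'a set" where
  "Qfar F x \<delta> = {y \<in> F. norm (x - y) \<ge> rad F x - \<delta>}"

definition UR :: "'a::real_normed_vector itself \<Rightarrow> bool" where
  "UR _ \<longleftrightarrow> (\<forall>(x::nat \<Rightarrow> 'a) y.
      (\<forall>n. x n \<in> sphere 0 1 \<and> y n \<in> sphere 0 1) \<longrightarrow>
      (\<lambda>n. norm ((1/2) *\<^sub>R (x n + y n))) \<longlonglongrightarrow> 1 \<longrightarrow>
      (\<lambda>n. norm (x n - y n)) \<longlonglongrightarrow> 0)"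

end

theory Submission
  imports Defs
begin

text \<open>
  The antipode \<open>-x\<close> realises \<open>r(S_X, x) = 2\<close>, so it lies in every \<open>Q_{S_X}(x,\<delta>)\<close>; this
  gives \<open>d(Q(x,\<delta>), Q(x',\<delta>)) \<le> \<parallel>x - x'\<parallel>\<close> in any normed space. Conversely, a point \<open>y\<close>
  of \<open>Q(x,\<delta>)\<close> satisfies \<open>\<parallel>x + (-y)\<parallel> \<ge> 2 - \<delta>\<close>, so uniform rotundity forces \<open>y\<close> to be
  uniformly close to \<open>-x\<close> for small \<open>\<delta>\<close>; then the two sets sit in small balls around
  \<open>-x\<close> and \<open>-x'\<close>, whose distance is \<open>\<parallel>x - x'\<parallel>\<close>. Statement (3) is (2) with \<open>x' = -x\<close>.
\<close>

lemma norm_diff_antipode: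
  fixes x :: "'a::real_normed_vector"
  assumes "x \<in> sphere 0 1"
  shows "norm (x - - x) = 2"
  using assms by (simp flip: scaleR_2)

lemma rad_sphere:
  fixes x :: "'a::real_normed_vector"
  assumes x: "x \<in> sphere 0 1"
  shows "rad (sphere 0 1) x = 2"
  unfolding rad_def
proof (rule cSup_eq_maximum)
  show "2 \<in> (\<lambda>y. norm (x - y)) ` sphere 0 1"
    using x norm_diff_antipode[OF x] by (intro image_eqI[where x="- x"]) auto
next
  fix r assume "r \<in> (\<lambda>y. norm (x - y)) ` sphere 0 1"
  then obtain y where "y \<in> sphere 0 1" "r = norm (x - y)" by blast
  then show "r \<le> 2"
    using x norm_triangle_ineq4[of x y] by simp
qed

lemma antipode_in_Qfar_sphere:
  fixes x :: "'a::real_normed_vector"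
  assumes "x \<in> sphere 0 1" and "\<delta> \<ge> 0"
  shows "- x \<in> Qfar (sphere 0 1) x \<delta>"
  using assms norm_diff_antipode[of x] by (simp add: Qfar_def rad_sphere)

lemma setdist_Qfar_sphere_le:
  fixes x x' :: "'a::real_normed_vector"
  assumes "x \<in> sphere 0 1" "x' \<in> sphere 0 1" and "\<delta> \<ge> 0"
  shows "setdist (Qfar (sphere 0 1) x \<delta>) (Qfar (sphere 0 1) x' \<delta>) \<le> norm (x - x')"
  using setdist_le_dist[OF antipode_in_Qfar_sphere antipode_in_Qfar_sphere] assms
  by (simp add: dist_norm norm_minus_commute)

lemma setdist_ge_dist_minus_radii:
  fixes a b :: "'a::metric_space"
  assumes "A \<noteq> {}" "B \<noteq> {}" "A \<subseteq> cball a r" "B \<subseteq> cball b s"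
  shows "dist a b - r - s \<le> setdist A B"
proof (rule le_setdistI)
  fix u v assume "u \<in> A" "v \<in> B"
  then have "dist a u \<le> r" "dist b v \<le> s" using assms by auto
  then show "dist a b - r - s \<le> dist u v"
    using dist_triangle[of a b u] dist_triangle[of u b v] by (simp add: dist_commute)
qed (use assms in auto)

lemma UR_modulus:
  assumes U: "UR TYPE('a::real_normed_vector)" and e: "e > 0"
  obtains d where "d > 0"
    "\<And>u v. u \<in> sphere (0::'a) 1 \<Longrightarrow> v \<in> sphere 0 1 \<Longrightarrow> norm (u + v) > 2 - d \<Longrightarrow>
      norm (u - v) < e"
proof (rule ccontr)
  assume "\<not> thesis"
  then have "\<forall>n. \<exists>u v. u \<in> sphere (0::'a) 1 \<and> v \<in> sphere 0 1 \<and>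
      norm (u + v) > 2 - inverse (real (Suc n)) \<and> norm (u - v) \<ge> e"
    using that by (meson not_less of_nat_0_less_iff positive_imp_inverse_positive zero_less_Suc)
  then obtain u v :: "nat \<Rightarrow> 'a" where uv: "\<And>n. u n \<in> sphere 0 1 \<and> v n \<in> sphere 0 1 \<and>
      norm (u n + v n) > 2 - inverse (real (Suc n)) \<and> norm (u n - v n) \<ge> e"
    by metis
  have lower: "\<forall>n. 1 - inverse (real (Suc n)) / 2 \<le> norm ((1/2) *\<^sub>R (u n + v n))"
    using uv by (simp add: order_less_imp_le)
  have upper: "\<forall>n. norm ((1/2) *\<^sub>R (u n + v n)) \<le> 1"
    using uv by (simp add: norm_triangle_le)
  have "(\<lambda>n. 1 - inverse (real (Suc n)) / 2) \<longlonglongrightarrow> 1 - 0 / 2"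
    by (intro tendsto_intros LIMSEQ_inverse_real_of_nat) simp
  then have "(\<lambda>n. norm ((1/2) *\<^sub>R (u n + v n))) \<longlonglongrightarrow> 1"
    by (intro tendsto_sandwich[OF always_eventually[OF lower] always_eventually[OF upper]]) simp_all
  then have "(\<lambda>n. norm (u n - v n)) \<longlonglongrightarrow> 0"
    using U[unfolded UR_def, rule_format, of u v] uv by blast
  then obtain N where "\<forall>n\<ge>N. norm (norm (u n - v n) - 0) < e"
    using LIMSEQ_D e by blast
  with uv[of N] show False by auto
qed

lemma UR_Qfar_sphere_subset_ball:
  assumes U: "UR TYPE('a::real_normed_vector)" and e: "e > 0"
  obtains d where "d > 0"
    "\<And>\<delta> x. \<delta> < d \<Longrightarrow> x \<in> sphere (0::'a) 1 \<Longrightarrow> Qfar (sphere 0 1) x \<delta> \<subseteq> ball (- x) e"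
proof -
  obtain d where d: "d > 0"
    and mod: "\<And>u v. u \<in> sphere (0::'a) 1 \<Longrightarrow> v \<in> sphere 0 1 \<Longrightarrow> norm (u + v) > 2 - d \<Longrightarrow>
      norm (u - v) < e"
    using UR_modulus[OF U e] by blast
  have "Qfar (sphere 0 1) x \<delta> \<subseteq> ball (- x) e" if "\<delta> < d" "x \<in> sphere (0::'a) 1" for \<delta> x
  proof
    fix y assume "y \<in> Qfar (sphere 0 1) x \<delta>"
    then have "- y \<in> sphere 0 1" "norm (x + - y) > 2 - d"
      using that rad_sphere[of x] by (auto simp: Qfar_def)
    then have "norm (x - - y) < e" using mod that(2) by blast
    then show "y \<in> ball (- x) e"
      by (metis add.commute diff_minus_eq_add dist_norm mem_ball norm_minus_commute)
  qed
  with d that show ?thesis by blast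
qed

lemma UR_setdist_Qfar_sphere_approx:
  assumes U: "UR TYPE('a::real_normed_vector)" and \<epsilon>: "\<epsilon> > 0"
  obtains d where "d > 0"
    "\<And>\<delta> x x'. 0 \<le> \<delta> \<Longrightarrow> \<delta> < d \<Longrightarrow> x \<in> sphere (0::'a) 1 \<Longrightarrow> x' \<in> sphere 0 1 \<Longrightarrow>
      \<bar>setdist (Qfar (sphere 0 1) x \<delta>) (Qfar (sphere 0 1) x' \<delta>) - norm (x - x')\<bar> < \<epsilon>"
proof -
  obtain d where d: "d > 0"
    and Q: "\<And>\<delta> x. \<delta> < d \<Longrightarrow> x \<in> sphere (0::'a) 1 \<Longrightarrow>
      Qfar (sphere 0 1) x \<delta> \<subseteq> ball (- x) (\<epsilon>/3)"
    using UR_Qfar_sphere_subset_ball[OF U, of "\<epsilon>/3"] \<epsilon> by auto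
  have "\<bar>setdist (Qfar (sphere 0 1) x \<delta>) (Qfar (sphere 0 1) x' \<delta>) - norm (x - x')\<bar> < \<epsilon>"
    if "0 \<le> \<delta>" "\<delta> < d" "x \<in> sphere (0::'a) 1" "x' \<in> sphere 0 1" for \<delta> x x'
  proof -
    have "dist (- x) (- x') - \<epsilon>/3 - \<epsilon>/3
        \<le> setdist (Qfar (sphere 0 1) x \<delta>) (Qfar (sphere 0 1) x' \<delta>)"
      using that antipode_in_Qfar_sphere Q[of \<delta>] ball_subset_cball
      by (intro setdist_ge_dist_minus_radii) blast+
    moreover have "setdist (Qfar (sphere 0 1) x \<delta>) (Qfar (sphere 0 1) x' \<delta>) \<le> norm (x - x')"
      using that by (intro setdist_Qfar_sphere_le)
    ultimately show ?thesis
      using \<epsilon> by (simp add: dist_norm norm_minus_commute)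
  qed
  with d that show ?thesis by blast
qed

lemma UR_imp_setdist_Qfar_sphere_uniform:
  assumes U: "UR TYPE('a::real_normed_vector)"
  shows "\<forall>\<epsilon>>0. \<exists>N. \<forall>n\<ge>N. \<forall>x\<in>sphere (0::'a) 1. \<forall>x'\<in>sphere 0 1.
           \<bar>setdist (Qfar (sphere 0 1) x (1 / real n)) (Qfar (sphere 0 1) x' (1 / real n))
             - norm (x - x')\<bar> < \<epsilon>"
proof (intro allI impI)
  fix \<epsilon> :: real assume "\<epsilon> > 0"
  then obtain d where d: "d > 0"
    and approx: "\<And>\<delta> x x'. 0 \<le> \<delta> \<Longrightarrow> \<delta> < d \<Longrightarrow> x \<in> sphere (0::'a) 1 \<Longrightarrow> x' \<in> sphere 0 1 \<Longrightarrow>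
      \<bar>setdist (Qfar (sphere 0 1) x \<delta>) (Qfar (sphere 0 1) x' \<delta>) - norm (x - x')\<bar> < \<epsilon>"
    using UR_setdist_Qfar_sphere_approx[OF U] by metis
  obtain N where "\<And>n. n \<ge> N \<Longrightarrow> 1 / real n < d"
    using order_tendstoD(2)[OF lim_1_over_n d] unfolding eventually_sequentially by blast
  with approx show "\<exists>N. \<forall>n\<ge>N. \<forall>x\<in>sphere (0::'a) 1. \<forall>x'\<in>sphere 0 1.
           \<bar>setdist (Qfar (sphere 0 1) x (1 / real n)) (Qfar (sphere 0 1) x' (1 / real n))
             - norm (x - x')\<bar> < \<epsilon>"
    by (meson of_nat_0_le_iff zero_le_divide_1_iff)
qed

lemma setdist_Qfar_sphere_uniform_imp_antipodal:
  assumes "\<forall>\<epsilon>>0. \<exists>N. \<forall>n\<ge>N. \<forall>x\<in>sphere (0::'a::real_normed_vector) 1. \<forall>x'\<in>sphere 0 1.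
             \<bar>setdist (Qfar (sphere 0 1) x (1 / real n)) (Qfar (sphere 0 1) x' (1 / real n))
               - norm (x - x')\<bar> < \<epsilon>"
  shows "\<forall>\<epsilon>>0. \<exists>N. \<forall>n\<ge>N. \<forall>x\<in>sphere (0::'a) 1.
           \<bar>setdist (Qfar (sphere 0 1) x (1 / real n)) (Qfar (sphere 0 1) (-x) (1 / real n))
             - 2\<bar> < \<epsilon>"
  using assms norm_diff_antipode by (metis add.inverse_inverse mem_sphere_0 norm_minus_cancel)

theorem theorem3p12:
  assumes "\<exists>z::'a::{real_normed_vector,banach}. z \<noteq> 0"
  shows "(UR TYPE('a) \<longrightarrow>
           (\<forall>\<epsilon>>0. \<exists>N. \<forall>n\<ge>N. \<forall>x\<in>sphere (0::'a) 1. \<forall>x'\<in>sphere 0 1.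
              \<bar>setdist (Qfar (sphere 0 1) x (1 / real n)) (Qfar (sphere 0 1) x' (1 / real n))
                - norm (x - x')\<bar> < \<epsilon>))
       \<and> ((\<forall>\<epsilon>>0. \<exists>N. \<forall>n\<ge>N. \<forall>x\<in>sphere (0::'a) 1. \<forall>x'\<in>sphere 0 1.
              \<bar>setdist (Qfar (sphere 0 1) x (1 / real n)) (Qfar (sphere 0 1) x' (1 / real n))
                - norm (x - x')\<bar> < \<epsilon>)
          \<longrightarrow>
          (\<forall>\<epsilon>>0. \<exists>N. \<forall>n\<ge>N. \<forall>x\<in>sphere (0::'a) 1.
              \<bar>setdist (Qfar (sphere 0 1) x (1 / real n)) (Qfar (sphere 0 1) (-x) (1 / real n))
                - 2\<bar> < \<epsilon>))"
  using UR_imp_setdist_Qfar_sphere_uniform setdist_Qfar_sphere_uniform_imp_antipodal by blast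

end
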